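(* Let $n\ge 2$. For $p\in(0,1)$ let $\mathfrak p$ be the geometric distribution $p_i=(1-p)p^{i-1}$, $i\in\mathbb N$, and let $d(p)$ be the Hausdorff dimension of $\Pi_{\mathfrak p}(n)=\pi_{\mathfrak p}(\{1,\dots,n\}^{\mathbb N})$. Then $d(p)$ is the unique solution $d$ of $(1-p^{dn})(1-p)^d/(1-p^d)=1$, and as $p$ ranges over $(0,1)$, $d(p)$ attains every value in $(0,1)$.
   Context: $\mathbb N=\{1,2,3,\dots\}$. For a probability distribution $\mathfrak p=(p_i)$ with all $p_i\in(0,1)$ and $\sum_i p_i=1$, set $\widehat{p_1}=0$, $\widehat{p_k}=\sum_{i=1}^{k-1}p_i$ for $k\ge2$, $T_k x=p_kx+\widehat{p_k}$, and $\pi_{\mathfrak p}((n_j))=\lim_{j\to\infty}T_{n_1}\circ\cdots\circ T_{n_j}(0)=\widehat{p_{n_1}}+\sum_{j=1}^\infty p_{n_1}\cdots p_{n_j}\widehat{p_{n_{j+1}}}$, a map $\mathbb N^{\mathbb N}\to[0,1)$. *)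

theory Defs
  imports "HOL-Analysis.Analysis"
begin

definition hausdorff_approx :: "real \<Rightarrow> real \<Rightarrow> real set \<Rightarrow> ennreal" where
  "hausdorff_approx s \<delta> E =
     (INF U \<in> {U :: nat \<Rightarrow> real set. E \<subseteq> (\<Union>i. U i) \<and>
                  (\<forall>i. bounded (U i) \<and> diameter (U i) \<le> \<delta>)}.
        (\<Sum>i. ennreal (diameter (U i) powr s)))"

definition hausdorff_measure :: "real \<Rightarrow> real set \<Rightarrow> ennreal" where
  "hausdorff_measure s E = (SUP \<delta> \<in> {0<..}. hausdorff_approx s \<delta> E)"

definition hausdorff_dim :: "real set \<Rightarrow> real" where
  "hausdorff_dim E = Inf {s. 0 \<le> s \<and> hausdorff_measure s E = 0}"

text \<open>A probability vector p is a function indexed by 1,2,3,...; a sequence in N^N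
  is a function nat => nat (index j = 0,1,2,... corresponds to n_1,n_2,...)
  with all values >= 1.\<close>

definition phat :: "(nat \<Rightarrow> real) \<Rightarrow> nat \<Rightarrow> real" where
  "phat p k = (\<Sum>i\<in>{1..<k}. p i)"

definition Tmap :: "(nat \<Rightarrow> real) \<Rightarrow> nat \<Rightarrow> real \<Rightarrow> real" where
  "Tmap p k x = p k * x + phat p k"

fun Tcomp :: "(nat \<Rightarrow> real) \<Rightarrow> (nat \<Rightarrow> nat) \<Rightarrow> nat \<Rightarrow> real \<Rightarrow> real" where
  "Tcomp p w 0 = id"
| "Tcomp p w (Suc j) = Tcomp p w j \<circ> Tmap p (w j)"

definition pi_map :: "(nat \<Rightarrow> real) \<Rightarrow> (nat \<Rightarrow> nat) \<Rightarrow> real" where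
  "pi_map p w = lim (\<lambda>j. Tcomp p w j 0)"

definition geom :: "real \<Rightarrow> nat \<Rightarrow> real" where
  "geom q i = (1 - q) * q ^ (i - 1)"

definition Pi_set :: "(nat \<Rightarrow> real) \<Rightarrow> nat \<Rightarrow> real set" where
  "Pi_set p n = pi_map p ` {w. \<forall>j. w j \<in> {1..n}}"

end

theory Submission
  imports Defs "HOL-Probability.Probability"
begin

text \<open>
  The word \<open>w\<close> is the address of \<open>pi_map p w\<close> under the contractions \<open>T\<^sub>1, \<dots>, T\<^sub>n\<close>. Its
  level-\<open>k\<close> cylinder interval, the image of \<open>[0, 1)\<close> under \<open>T\<^bsub>w 0\<^esub> \<circ> \<dots> \<circ> T\<^bsub>w (k-1)\<^esub>\<close>, has
  length \<open>p (w 0) \<dots> p (w (k-1))\<close>, and the intervals of two words that first differ before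
  level \<open>k\<close> are disjoint, ordered like the first differing digits.

  If \<open>p 1 powr s + \<dots> + p n powr s < 1\<close>, covering \<open>Pi_set p n\<close> by all level-\<open>k\<close> intervals shows that its
  \<open>s\<close>-dimensional Hausdorff measure vanishes. At the similarity dimension \<open>d\<close>, where the sum
  equals \<open>1\<close>, the Bernoulli measure with digit weights \<open>p i powr d\<close> gives each cylinder the
  \<open>d\<close>-th power of its length. A set of diameter \<open>L\<close> meets at most \<open>4 / min p\<close> of the
  cylinders stopped at length \<open>L\<close>, so its preimage has measure \<open>O(L powr d)\<close>, and the mass
  distribution principle gives a positive \<open>d\<close>-dimensional measure. Hence the dimension is the
  unique root of the strictly decreasing function \<open>s \<mapsto> p 1 powr s + \<dots> + p n powr s\<close>.

  For geometric weights this sum is a finite geometric series, which gives the stated equation;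
  as a function of \<open>p\<close> it is continuous, and explicit values of \<open>p\<close> put its value at a given
  \<open>t \<in> (0, 1)\<close> above and below \<open>1\<close>.
\<close>

lemma hausdorff_approx_le_finite_cover:
  assumes "finite W" and "0 \<le> \<delta>" and cover: "E \<subseteq> (\<Union>u\<in>W. f u)"
    and small: "\<And>u. u \<in> W \<Longrightarrow> bounded (f u) \<and> diameter (f u) \<le> \<delta>"
  shows "hausdorff_approx s \<delta> E \<le> ennreal (\<Sum>u\<in>W. diameter (f u) powr s)"
proof -
  obtain h where h: "bij_betw h {..<card W} W"
    using ex_bij_betw_nat_finite[OF \<open>finite W\<close>] lessThan_atLeast0 by metis
  define U where "U j = (if j < card W then f (h j) else {})" for j
  have "E \<subseteq> (\<Union>j. U j)"
  proof
    fix x assume "x \<in> E"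
    then obtain u where "u \<in> W" "x \<in> f u" using cover by blast
    then obtain j where "j < card W" "h j = u"
      using h unfolding bij_betw_def by (metis imageE lessThan_iff)
    then show "x \<in> (\<Union>j. U j)" using \<open>x \<in> f u\<close> by (auto simp: U_def)
  qed
  moreover have "\<forall>j. bounded (U j) \<and> diameter (U j) \<le> \<delta>"
    using small h \<open>0 \<le> \<delta>\<close> by (auto simp: U_def bij_betw_def)
  ultimately have "hausdorff_approx s \<delta> E \<le> (\<Sum>j. ennreal (diameter (U j) powr s))"
    unfolding hausdorff_approx_def by (intro INF_lower) auto
  also have "\<dots> = (\<Sum>j<card W. ennreal (diameter (f (h j)) powr s))"
    by (subst suminf_finite[of "{..<card W}"]) (auto simp: U_def)
  also have "\<dots> = (\<Sum>u\<in>W. ennreal (diameter (f u) powr s))"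
    using sum.reindex_bij_betw[OF h, of "\<lambda>u. ennreal (diameter (f u) powr s)"] by simp
  finally show ?thesis by simp
qed

lemma hausdorff_dim_eqI:
  assumes "0 \<le> d"
    and "\<And>s. d < s \<Longrightarrow> hausdorff_measure s E = 0"
    and "\<And>s. 0 \<le> s \<Longrightarrow> s \<le> d \<Longrightarrow> hausdorff_measure s E \<noteq> 0"
  shows "hausdorff_dim E = d"
proof -
  have "{s. 0 \<le> s \<and> hausdorff_measure s E = 0} = {d<..}"
    using assms by (force simp: not_le[symmetric])
  then show ?thesis by (simp add: hausdorff_dim_def)
qed

lemma card_disjoint_intervals_le:
  fixes a l :: "'a \<Rightarrow> real"
  assumes "finite F" and "0 < m" and "0 \<le> r"
    and disj: "disjoint_family_on (\<lambda>c. {a c..<a c + l c}) F"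
    and long: "\<And>c. c \<in> F \<Longrightarrow> m < l c"
    and inside: "\<And>c. c \<in> F \<Longrightarrow> {a c..<a c + l c} \<subseteq> {x..<x + r}"
  shows "real (card F) * m \<le> r"
proof -
  have l: "\<And>c. c \<in> F \<Longrightarrow> 0 \<le> l c" using long \<open>0 < m\<close> by (meson less_le_trans less_imp_le)
  have "ennreal (\<Sum>c\<in>F. l c) = (\<Sum>c\<in>F. emeasure lborel {a c..<a c + l c})"
    using l by (simp add: sum_ennreal)
  also have "\<dots> = emeasure lborel (\<Union>c\<in>F. {a c..<a c + l c})"
    by (rule sum_emeasure[OF _ disj \<open>finite F\<close>]) auto
  also have "\<dots> \<le> emeasure lborel {x..<x + r}"
    using inside by (intro emeasure_mono) (simp_all add: UN_least)
  also have "\<dots> = ennreal r" using \<open>0 \<le> r\<close> by simp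
  finally have "(\<Sum>c\<in>F. l c) \<le> r" using \<open>0 \<le> r\<close> by simp
  moreover have "real (card F) * m \<le> (\<Sum>c\<in>F. l c)"
    using sum_mono[of F "\<lambda>_. m" l] long by (simp add: less_imp_le)
  ultimately show ?thesis by linarith
qed

section \<open>Cylinder intervals\<close>

definition comp_scale :: "(nat \<Rightarrow> real) \<Rightarrow> (nat \<Rightarrow> nat) \<Rightarrow> nat \<Rightarrow> real" where
  "comp_scale p w k = (\<Prod>j<k. p (w j))"

definition comp_offset :: "(nat \<Rightarrow> real) \<Rightarrow> (nat \<Rightarrow> nat) \<Rightarrow> nat \<Rightarrow> real" where
  "comp_offset p w k = (\<Sum>j<k. comp_scale p w j * phat p (w j))"

lemma comp_scale_0 [simp]: "comp_scale p w 0 = 1"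
  by (simp add: comp_scale_def)

lemma comp_scale_Suc: "comp_scale p w (Suc k) = comp_scale p w k * p (w k)"
  by (simp add: comp_scale_def)

lemma comp_offset_0 [simp]: "comp_offset p w 0 = 0"
  by (simp add: comp_offset_def)

lemma comp_offset_Suc: "comp_offset p w (Suc k) = comp_offset p w k + comp_scale p w k * phat p (w k)"
  by (simp add: comp_offset_def)

lemma Tcomp_eq: "Tcomp p w k x = comp_offset p w k + comp_scale p w k * x"
  by (induction k arbitrary: x) (simp_all add: Tmap_def comp_offset_Suc comp_scale_Suc algebra_simps)

lemma comp_scale_cong: "(\<And>j. j < k \<Longrightarrow> w j = v j) \<Longrightarrow> comp_scale p w k = comp_scale p v k"
  by (simp add: comp_scale_def)

lemma comp_offset_cong:
  assumes "\<And>j. j < k \<Longrightarrow> w j = v j"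
  shows "comp_offset p w k = comp_offset p v k"
  unfolding comp_offset_def
proof (rule sum.cong[OF refl])
  fix j assume "j \<in> {..<k}"
  then have "comp_scale p w j = comp_scale p v j" "w j = v j"
    using assms by (auto intro: comp_scale_cong)
  then show "comp_scale p w j * phat p (w j) = comp_scale p v j * phat p (v j)" by simp
qed

lemma comp_scale_add: "comp_scale p w (j + k) = comp_scale p w k * comp_scale p (\<lambda>i. w (i + k)) j"
  by (induction j) (simp_all add: comp_scale_Suc)

lemma phat_Suc: "1 \<le> i \<Longrightarrow> phat p (Suc i) = phat p i + p i"
  by (simp add: phat_def)

definition cylinder :: "(nat \<Rightarrow> nat) \<Rightarrow> nat \<Rightarrow> (nat \<Rightarrow> nat) set" where
  "cylinder w k = {v. \<forall>j<k. v j = w j}"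

definition weight_sum :: "(nat \<Rightarrow> real) \<Rightarrow> nat \<Rightarrow> real \<Rightarrow> real" where
  "weight_sum p n s = (\<Sum>i=1..n. p i powr s)"

locale ifs_weights =
  fixes p :: "nat \<Rightarrow> real" and n :: nat
  assumes weight_pos: "\<And>i. i \<in> {1..n} \<Longrightarrow> 0 < p i"
    and weights_sum_less_1: "(\<Sum>i=1..n. p i) < 1"
    and digits_nonempty: "1 \<le> n"
begin

definition "mass = (\<Sum>i=1..n. p i)"

definition "words = {w :: nat \<Rightarrow> nat. \<forall>j. w j \<in> {1..n}}"

lemma Pi_set_eq: "Pi_set p n = pi_map p ` words"
  by (simp add: Pi_set_def words_def)

lemma words_prefix: "w \<in> words \<Longrightarrow> \<forall>j<k. w j \<in> {1..n}"
  by (simp add: words_def)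

lemma weight_nonneg: "i \<in> {1..n} \<Longrightarrow> 0 \<le> p i"
  using weight_pos by (simp add: less_imp_le)

lemma mass_less_1: "mass < 1"
  using weights_sum_less_1 by (simp add: mass_def)

lemma weight_le_mass: "i \<in> {1..n} \<Longrightarrow> p i \<le> mass"
  unfolding mass_def by (rule member_le_sum) (auto intro: weight_nonneg)

lemma mass_pos: "0 < mass"
  using weight_le_mass[of 1] weight_pos[of 1] digits_nonempty by auto

lemma weight_less_1: "i \<in> {1..n} \<Longrightarrow> p i < 1"
  using weight_le_mass mass_less_1 by fastforce

lemma phat_mono: "i \<le> j \<Longrightarrow> j \<le> Suc n \<Longrightarrow> phat p i \<le> phat p j"
  unfolding phat_def by (rule sum_mono2) (auto intro: weight_nonneg)

lemma phat_nonneg: "j \<le> Suc n \<Longrightarrow> 0 \<le> phat p j"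
  using phat_mono[of 0 j] by (simp add: phat_def)

lemma phat_add_weight_le_mass: "i \<in> {1..n} \<Longrightarrow> phat p i + p i \<le> mass"
proof -
  assume i: "i \<in> {1..n}"
  then have "phat p i + p i = phat p (Suc i)" by (simp add: phat_Suc)
  also have "\<dots> \<le> phat p (Suc n)" using i by (simp add: phat_mono)
  also have "phat p (Suc n) = mass" unfolding phat_def mass_def by (rule sum.cong) auto
  finally show ?thesis .
qed

lemma comp_scale_pos: "\<forall>j<k. u j \<in> {1..n} \<Longrightarrow> 0 < comp_scale p u k"
  unfolding comp_scale_def by (intro prod_pos) (auto intro: weight_pos)

lemma comp_scale_le_mass_power: "\<forall>j<k. u j \<in> {1..n} \<Longrightarrow> comp_scale p u k \<le> mass ^ k"
  unfolding comp_scale_def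
  using prod_mono[of "{..<k}" "\<lambda>j. p (u j)" "\<lambda>_. mass"] weight_pos weight_le_mass
  by (auto intro: less_imp_le)

lemma pi_term_nonneg:
  assumes w: "w \<in> words"
  shows "0 \<le> comp_scale p w j * phat p (w j)"
proof -
  have "0 < comp_scale p w j" using comp_scale_pos words_prefix[OF w] by blast
  moreover have "0 \<le> phat p (w j)" using w by (intro phat_nonneg) (simp add: words_def le_SucI)
  ultimately show ?thesis by simp
qed

lemma pi_term_le:
  assumes w: "w \<in> words"
  shows "comp_scale p w j * phat p (w j) \<le> mass ^ j"
proof -
  have "phat p (w j) \<le> 1"
    using phat_add_weight_le_mass[of "w j"] mass_less_1 weight_pos[of "w j"] w by (auto simp: words_def)
  then have "comp_scale p w j * phat p (w j) \<le> comp_scale p w j"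
    using comp_scale_pos words_prefix[OF w] by (simp add: mult_left_le)
  also have "\<dots> \<le> mass ^ j" using comp_scale_le_mass_power words_prefix[OF w] by blast
  finally show ?thesis .
qed

lemma summable_pi_terms:
  assumes w: "w \<in> words"
  shows "summable (\<lambda>j. comp_scale p w j * phat p (w j))"
proof (rule summable_comparison_test')
  show "summable (\<lambda>j. mass ^ j)" using mass_pos mass_less_1 by simp
  show "norm (comp_scale p w j * phat p (w j)) \<le> mass ^ j" for j
    using pi_term_le[OF w] pi_term_nonneg[OF w] by simp
qed

lemma pi_map_sums: "w \<in> words \<Longrightarrow> (\<lambda>k. comp_offset p w k) \<longlonglongrightarrow> pi_map p w"
proof -
  assume w: "w \<in> words"
  have "(\<lambda>k. comp_offset p w k) \<longlonglongrightarrow> (\<Sum>j. comp_scale p w j * phat p (w j))"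
    unfolding comp_offset_def by (rule summable_LIMSEQ[OF summable_pi_terms[OF w]])
  moreover have "pi_map p w = lim (\<lambda>k. comp_offset p w k)"
    by (simp add: pi_map_def Tcomp_eq)
  ultimately show ?thesis by (simp add: limI)
qed

lemma pi_map_eq_suminf: "w \<in> words \<Longrightarrow> pi_map p w = (\<Sum>j. comp_scale p w j * phat p (w j))"
  using pi_map_sums summable_LIMSEQ[OF summable_pi_terms] LIMSEQ_unique
  unfolding comp_offset_def by blast

lemma pi_map_shift:
  assumes w: "w \<in> words"
  shows "pi_map p w = comp_offset p w k + comp_scale p w k * pi_map p (\<lambda>j. w (j + k))"
proof -
  have w': "(\<lambda>j. w (j + k)) \<in> words" using w by (simp add: words_def)
  have "pi_map p w = (\<Sum>j. comp_scale p w (j + k) * phat p (w (j + k))) + comp_offset p w k"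
    unfolding pi_map_eq_suminf[OF w] comp_offset_def
    by (rule suminf_split_initial_segment[OF summable_pi_terms[OF w]])
  also have "(\<Sum>j. comp_scale p w (j + k) * phat p (w (j + k)))
      = (\<Sum>j. comp_scale p w k * (comp_scale p (\<lambda>i. w (i + k)) j * phat p (w (j + k))))"
    by (simp add: comp_scale_add mult.assoc)
  also have "\<dots> = comp_scale p w k * pi_map p (\<lambda>j. w (j + k))"
    using pi_map_eq_suminf[OF w'] summable_pi_terms[OF w'] by (simp add: suminf_mult)
  finally show ?thesis by simp
qed

lemma cylinder_end_antimono:
  assumes "w \<in> words" and "m \<le> k"
  shows "comp_offset p w k + comp_scale p w k \<le> comp_offset p w m + comp_scale p w m"
  using \<open>m \<le> k\<close>
proof (induction k rule: dec_induct)
  case (step k)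
  have "phat p (w k) + p (w k) \<le> 1"
    using phat_add_weight_le_mass[of "w k"] mass_less_1 \<open>w \<in> words\<close> by (auto simp: words_def)
  then have "comp_scale p w k * (phat p (w k) + p (w k)) \<le> comp_scale p w k"
    using comp_scale_pos[OF words_prefix[OF \<open>w \<in> words\<close>]] by (simp add: mult_left_le)
  then show ?case using step.IH by (simp add: comp_offset_Suc comp_scale_Suc algebra_simps)
qed simp

lemma pi_map_le_1: "w \<in> words \<Longrightarrow> pi_map p w \<le> 1"
proof -
  assume w: "w \<in> words"
  have "comp_offset p w k \<le> 1" for k
    using cylinder_end_antimono[OF w, of 0 k] comp_scale_pos[OF words_prefix[OF w], of k] by simp
  then show ?thesis using pi_map_sums[OF w] by (intro LIMSEQ_le_const2) auto
qed

lemma pi_map_nonneg: "w \<in> words \<Longrightarrow> 0 \<le> pi_map p w"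
  using pi_map_eq_suminf summable_pi_terms pi_term_nonneg by (simp add: suminf_nonneg)

text \<open>The strict bound \<open>mass < 1\<close> is what makes the cylinder intervals below half-open.\<close>
lemma pi_map_le_mass: "w \<in> words \<Longrightarrow> pi_map p w \<le> mass"
proof -
  assume w: "w \<in> words"
  have w': "(\<lambda>j. w (j + 1)) \<in> words" using w by (simp add: words_def)
  have "pi_map p w = phat p (w 0) + p (w 0) * pi_map p (\<lambda>j. w (j + 1))"
    using pi_map_shift[OF w, of 1] by (simp add: comp_offset_Suc comp_scale_Suc)
  also have "\<dots> \<le> phat p (w 0) + p (w 0)"
    using pi_map_le_1[OF w'] weight_pos[of "w 0"] w by (simp add: words_def mult_left_le)
  also have "\<dots> \<le> mass" using phat_add_weight_le_mass w by (simp add: words_def)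
  finally show ?thesis .
qed

lemma pi_map_in_cylinder_interval:
  assumes w: "w \<in> words"
  shows "pi_map p w \<in> {comp_offset p w k ..< comp_offset p w k + comp_scale p w k}"
proof -
  let ?x = "pi_map p (\<lambda>j. w (j + k))"
  have w': "(\<lambda>j. w (j + k)) \<in> words" using w by (simp add: words_def)
  have "0 \<le> ?x" "?x < 1" using pi_map_nonneg[OF w'] pi_map_le_mass[OF w'] mass_less_1 by auto
  then show ?thesis
    using pi_map_shift[OF w, of k] comp_scale_pos[OF words_prefix[OF w], of k] by simp
qed

lemma cylinder_interval_order:
  assumes w: "w \<in> words" and v: "v \<in> words"
    and eq: "\<And>i. i < j \<Longrightarrow> w i = v i" and less: "w j < v j"
    and "j < k" and "j < m"
  shows "comp_offset p w k + comp_scale p w k \<le> comp_offset p v m"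
proof -
  have "comp_offset p w k + comp_scale p w k \<le> comp_offset p w (Suc j) + comp_scale p w (Suc j)"
    using cylinder_end_antimono[OF w] \<open>j < k\<close> by simp
  also have "\<dots> = comp_offset p w j + comp_scale p w j * phat p (Suc (w j))"
    using w by (simp add: comp_offset_Suc comp_scale_Suc phat_Suc words_def algebra_simps)
  also have "\<dots> \<le> comp_offset p v j + comp_scale p v j * phat p (v j)"
  proof -
    have "comp_offset p w j = comp_offset p v j" "comp_scale p w j = comp_scale p v j"
      using eq by (intro comp_offset_cong comp_scale_cong; simp)+
    moreover have "phat p (Suc (w j)) \<le> phat p (v j)"
      using less v by (intro phat_mono) (auto simp: words_def le_SucI)
    ultimately show ?thesis using comp_scale_pos[OF words_prefix[OF w], of j] by simp
  qed
  also have "\<dots> = comp_offset p v (Suc j)" by (simp add: comp_offset_Suc)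
  also have "\<dots> \<le> comp_offset p v m"
    unfolding comp_offset_def using \<open>j < m\<close> by (intro sum_mono2) (auto intro: pi_term_nonneg[OF v])
  finally show ?thesis .
qed

section \<open>Upper bound and the similarity dimension\<close>

lemma sum_prefix_scales_powr:
  "(\<Sum>u\<in>PiE {..<k} (\<lambda>_. {1..n}). comp_scale p u k powr s) = weight_sum p n s ^ k"
proof -
  have "(\<Sum>u\<in>PiE {..<k} (\<lambda>_. {1..n}). comp_scale p u k powr s)
      = (\<Sum>u\<in>PiE {..<k} (\<lambda>_. {1..n}). \<Prod>j<k. p (u j) powr s)"
    unfolding comp_scale_def
    by (intro sum.cong refl prod_powr_distrib)
  also have "\<dots> = (\<Prod>j<k. \<Sum>i=1..n. p i powr s)"
    by (rule prod_sum_PiE[symmetric]) auto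
  finally show ?thesis by (simp add: weight_sum_def)
qed

text \<open>The level-\<open>k\<close> cylinder intervals cover \<open>Pi_set p n\<close>, and their lengths \<open>comp_scale p u k\<close>
  have \<open>s\<close>-th powers summing to \<open>weight_sum p n s ^ k\<close>.\<close>
lemma hausdorff_approx_Pi_set_le:
  assumes "mass ^ k \<le> \<delta>"
  shows "hausdorff_approx s \<delta> (Pi_set p n) \<le> ennreal (weight_sum p n s ^ k)"
proof -
  define W where "W = PiE {..<k} (\<lambda>_. {1..n::nat})"
  define I where "I u = {comp_offset p u k .. comp_offset p u k + comp_scale p u k}" for u
  have prefix: "\<forall>j<k. u j \<in> {1..n}" if "u \<in> W" for u
    using that by (auto simp: W_def PiE_iff)
  have "Pi_set p n \<subseteq> (\<Union>u\<in>W. I u)"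
  proof
    fix x assume "x \<in> Pi_set p n"
    then obtain w where w: "w \<in> words" and x: "x = pi_map p w" by (auto simp: Pi_set_eq)
    have "restrict w {..<k} \<in> W" using w by (auto simp: W_def words_def)
    moreover have "x \<in> I (restrict w {..<k})"
      using pi_map_in_cylinder_interval[OF w, of k] comp_offset_cong[of k "restrict w {..<k}" w p]
        comp_scale_cong[of k "restrict w {..<k}" w p]
      by (simp add: I_def x)
    ultimately show "x \<in> (\<Union>u\<in>W. I u)" by blast
  qed
  moreover have "bounded (I u) \<and> diameter (I u) \<le> \<delta>" if "u \<in> W" for u
    using comp_scale_pos[OF prefix[OF that]] comp_scale_le_mass_power[OF prefix[OF that]] assms
    by (simp add: I_def)
  moreover have "0 \<le> \<delta>" using assms mass_pos by (meson order_trans zero_le_power less_imp_le)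
  moreover have "finite W" by (simp add: W_def finite_PiE)
  ultimately have "hausdorff_approx s \<delta> (Pi_set p n) \<le> ennreal (\<Sum>u\<in>W. diameter (I u) powr s)"
    by (intro hausdorff_approx_le_finite_cover) auto
  also have "(\<Sum>u\<in>W. diameter (I u) powr s) = (\<Sum>u\<in>W. comp_scale p u k powr s)"
  proof (rule sum.cong[OF refl])
    fix u assume "u \<in> W"
    then show "diameter (I u) powr s = comp_scale p u k powr s"
      using comp_scale_pos[OF prefix[OF \<open>u \<in> W\<close>]] by (simp add: I_def)
  qed
  also have "\<dots> = weight_sum p n s ^ k"
    unfolding W_def by (rule sum_prefix_scales_powr)
  finally show ?thesis .
qed

lemma hausdorff_measure_Pi_set_eq_0:
  assumes "weight_sum p n s < 1"
  shows "hausdorff_measure s (Pi_set p n) = 0"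
  unfolding hausdorff_measure_def
proof (rule SUP_eqI)
  fix \<delta> :: real assume "\<delta> \<in> {0<..}"
  have "(\<lambda>k. mass ^ k) \<longlonglongrightarrow> 0" using mass_pos mass_less_1 by (intro LIMSEQ_power_zero) simp
  then have "eventually (\<lambda>k. mass ^ k < \<delta>) sequentially"
    using \<open>\<delta> \<in> {0<..}\<close> by (intro order_tendstoD(2)) auto
  then have "eventually (\<lambda>k. mass ^ k \<le> \<delta>) sequentially"
    by (rule eventually_mono) simp
  then have "eventually (\<lambda>k. hausdorff_approx s \<delta> (Pi_set p n) \<le> ennreal (weight_sum p n s ^ k)) sequentially"
    by (auto elim: eventually_mono intro: hausdorff_approx_Pi_set_le)
  moreover have "(\<lambda>k. ennreal (weight_sum p n s ^ k)) \<longlonglongrightarrow> ennreal 0"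
    using assms by (intro tendsto_ennrealI LIMSEQ_power_zero) (simp add: weight_sum_def sum_nonneg)
  ultimately have "hausdorff_approx s \<delta> (Pi_set p n) \<le> ennreal 0"
    by (intro tendsto_lowerbound) (auto simp: eventually_mono)
  then show "hausdorff_approx s \<delta> (Pi_set p n) \<le> 0" by simp
qed simp

lemma weight_sum_strict_antimono: "x < y \<Longrightarrow> weight_sum p n y < weight_sum p n x"
  unfolding weight_sum_def using digits_nonempty
  by (intro sum_strict_mono powr_less_mono' weight_pos weight_less_1) auto

lemma weight_sum_0: "weight_sum p n 0 = n"
  using weight_pos by (simp add: weight_sum_def less_imp_neq[symmetric])

lemma weight_sum_1: "weight_sum p n 1 = mass"
  using weight_pos by (simp add: weight_sum_def mass_def less_imp_le)

lemma continuous_on_weight_sum: "continuous_on A (weight_sum p n)"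
  unfolding weight_sum_def using weight_pos by (intro continuous_intros) (auto simp: less_imp_neq[symmetric])

lemma weight_sum_eq_1_unique: "weight_sum p n x = 1 \<Longrightarrow> weight_sum p n y = 1 \<Longrightarrow> x = y"
  using weight_sum_strict_antimono[of x y] weight_sum_strict_antimono[of y x]
  by (cases x y rule: linorder_cases) auto

lemma weight_sum_eq_1_exists:
  assumes "2 \<le> n"
  shows "\<exists>d\<in>{0<..<1}. weight_sum p n d = 1"
proof -
  have "weight_sum p n 1 < 1" "1 < weight_sum p n 0"
    using weight_sum_0 weight_sum_1 mass_less_1 assms by auto
  then obtain d where "0 \<le> d" "d \<le> 1" "weight_sum p n d = 1"
    using IVT2'[of "weight_sum p n" 1 1 0] continuous_on_weight_sum by force
  moreover have "d \<noteq> 0" "d \<noteq> 1"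
    using \<open>weight_sum p n d = 1\<close> \<open>weight_sum p n 1 < 1\<close> \<open>1 < weight_sum p n 0\<close> by auto
  ultimately show ?thesis by auto
qed

section \<open>Lower bound by mass distribution\<close>

definition "min_weight = Min (p ` {1..n})"

lemma min_weight_pos: "0 < min_weight"
  unfolding min_weight_def using digits_nonempty by (subst Min_gr_iff) (auto intro: weight_pos)

lemma min_weight_le: "i \<in> {1..n} \<Longrightarrow> min_weight \<le> p i"
  unfolding min_weight_def by (intro Min_le) auto

definition "stopping_level L w = (LEAST k. comp_scale p w k \<le> L)"

lemma stopping_level_le:
  assumes w: "w \<in> words" and "0 < L"
  shows "comp_scale p w (stopping_level L w) \<le> L"
  unfolding stopping_level_def
proof (rule LeastI_ex)
  have "(\<lambda>k. mass ^ k) \<longlonglongrightarrow> 0" using mass_pos mass_less_1 by (intro LIMSEQ_power_zero) simp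
  then have "eventually (\<lambda>k. mass ^ k < L) sequentially"
    using \<open>0 < L\<close> by (intro order_tendstoD(2)) auto
  then obtain k where "mass ^ k < L" by (auto simp: eventually_sequentially)
  then show "\<exists>k. comp_scale p w k \<le> L"
    using comp_scale_le_mass_power[OF words_prefix[OF w], of k] by (auto intro: exI[of _ k])
qed

lemma stopping_level_minimal: "comp_scale p w k \<le> L \<Longrightarrow> stopping_level L w \<le> k"
  unfolding stopping_level_def by (rule Least_le)

lemma stopping_level_gt:
  assumes w: "w \<in> words" and "0 < L" "L < 1"
  shows "min_weight * L < comp_scale p w (stopping_level L w)"
proof (cases "stopping_level L w")
  case 0
  then show ?thesis using stopping_level_le[OF w \<open>0 < L\<close>] \<open>L < 1\<close> by simp
next
  case (Suc m)
  then have "\<not> comp_scale p w m \<le> L" using stopping_level_minimal[of w m L] by auto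
  then have "L < comp_scale p w m" by simp
  moreover have "min_weight \<le> p (w m)" using w min_weight_le by (auto simp: words_def)
  ultimately have "min_weight * L < p (w m) * comp_scale p w m"
    using min_weight_pos \<open>0 < L\<close> by (intro mult_le_less_imp_less) auto
  then show ?thesis using Suc by (simp add: comp_scale_Suc mult.commute)
qed

lemma stopping_level_le_if_agree:
  assumes "w \<in> words" and "0 < L" and agree: "\<And>j. j < stopping_level L w \<Longrightarrow> v j = w j"
  shows "stopping_level L v \<le> stopping_level L w"
proof (rule stopping_level_minimal)
  show "comp_scale p v (stopping_level L w) \<le> L"
    using comp_scale_cong[of "stopping_level L w" v w p, OF agree] stopping_level_le[OF assms(1,2)] by simp
qed

lemma stopping_cylinders_differ_early:
  assumes w: "w \<in> words" and v: "v \<in> words" and "0 < L"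
    and ne: "cylinder w (stopping_level L w) \<noteq> cylinder v (stopping_level L v)"
  shows "\<exists>j<min (stopping_level L w) (stopping_level L v). w j \<noteq> v j"
proof (rule ccontr)
  let ?a = "stopping_level L w" and ?b = "stopping_level L v"
  assume "\<not> ?thesis"
  then have agree: "\<And>j. j < min ?a ?b \<Longrightarrow> w j = v j" by auto
  have "?a = ?b"
  proof (cases "?a \<le> ?b")
    case True
    then have "?b \<le> ?a"
      using agree by (intro stopping_level_le_if_agree[OF w \<open>0 < L\<close>]) (auto intro: agree[symmetric])
    with True show ?thesis by simp
  next
    case False
    then have "?a \<le> ?b"
      using agree by (intro stopping_level_le_if_agree[OF v \<open>0 < L\<close>]) auto
    with False show ?thesis by simp
  qed
  then have "cylinder w ?a = cylinder v ?b" using agree by (auto simp: cylinder_def)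
  then show False using ne by simp
qed

lemma stopping_intervals_separated:
  assumes w: "w \<in> words" and v: "v \<in> words" and "0 < L"
    and ne: "cylinder w (stopping_level L w) \<noteq> cylinder v (stopping_level L v)"
  shows "comp_offset p w (stopping_level L w) + comp_scale p w (stopping_level L w)
           \<le> comp_offset p v (stopping_level L v)
       \<or> comp_offset p v (stopping_level L v) + comp_scale p v (stopping_level L v)
           \<le> comp_offset p w (stopping_level L w)"
proof -
  let ?a = "stopping_level L w" and ?b = "stopping_level L v"
  obtain j where j: "j < min ?a ?b" "w j \<noteq> v j"
    and least: "\<And>i. i < j \<Longrightarrow> \<not> (i < min ?a ?b \<and> w i \<noteq> v i)"
    using stopping_cylinders_differ_early[OF assms] exists_least_iff[of "\<lambda>j. j < min ?a ?b \<and> w j \<noteq> v j"]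
    by blast
  have before: "\<And>i. i < j \<Longrightarrow> w i = v i" using j(1) least by fastforce
  show ?thesis
  proof (cases "w j < v j")
    case True
    then show ?thesis using cylinder_interval_order[OF w v before] j by auto
  next
    case False
    then have "v j < w j" using j by auto
    then show ?thesis using cylinder_interval_order[OF v w, of j] before j by (metis min_less_iff_conj)
  qed
qed

text \<open>The stopping intervals of such words are disjoint, longer than \<open>min_weight * L\<close>, and lie in
  an interval of length \<open>4 * L\<close>.\<close>
lemma card_words_distinct_stopping_cylinders_le:
  assumes "0 < L" "L < 1" "finite W" "W \<subseteq> words" and near: "\<And>w. w \<in> W \<Longrightarrow> \<bar>pi_map p w - x\<bar> \<le> L"
    and distinct: "inj_on (\<lambda>w. cylinder w (stopping_level L w)) W"
  shows "real (card W) \<le> 4 / min_weight"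
proof -
  define a where "a w = comp_offset p w (stopping_level L w)" for w
  define l where "l w = comp_scale p w (stopping_level L w)" for w
  have disj: "disjoint_family_on (\<lambda>w. {a w..<a w + l w}) W"
    unfolding disjoint_family_on_def
  proof (intro ballI impI)
    fix w v assume "w \<in> W" "v \<in> W" "w \<noteq> v"
    then have "a w + l w \<le> a v \<or> a v + l v \<le> a w"
      using stopping_intervals_separated[of w v L] distinct \<open>W \<subseteq> words\<close> \<open>0 < L\<close>
      by (auto simp: a_def l_def inj_on_def)
    then show "{a w..<a w + l w} \<inter> {a v..<a v + l v} = {}" by auto
  qed
  have long: "min_weight * L < l w" if "w \<in> W" for w
    using stopping_level_gt that assms(1,2,4) by (auto simp: l_def)
  have inside: "{a w..<a w + l w} \<subseteq> {x - 2 * L..<x - 2 * L + 4 * L}" if "w \<in> W" for w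
  proof -
    have "pi_map p w \<in> {a w..<a w + l w}"
      unfolding a_def l_def using pi_map_in_cylinder_interval that assms(4) by auto
    moreover have "l w \<le> L" using stopping_level_le that assms(1,4) by (auto simp: l_def)
    ultimately show ?thesis using near[OF that] by auto
  qed
  have "real (card W) * (min_weight * L) \<le> 4 * L"
    using min_weight_pos \<open>0 < L\<close>
    by (intro card_disjoint_intervals_le[OF \<open>finite W\<close> _ _ disj long inside]) auto
  then show ?thesis using min_weight_pos \<open>0 < L\<close> by (simp add: pos_le_divide_eq)
qed

lemma card_stopping_cylinders_le:
  fixes x :: real
  assumes "0 < L" "L < 1"
  defines "G \<equiv> {w \<in> words. \<bar>pi_map p w - x\<bar> \<le> L}"
  shows "finite ((\<lambda>w. cylinder w (stopping_level L w)) ` G)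
    \<and> real (card ((\<lambda>w. cylinder w (stopping_level L w)) ` G)) \<le> 4 / min_weight"
proof -
  let ?cyl = "\<lambda>w. cylinder w (stopping_level L w)"
  have "card F \<le> nat \<lfloor>4 / min_weight\<rfloor>" if "F \<subseteq> ?cyl ` G" "finite F" for F
  proof -
    obtain W where W: "W \<subseteq> G" "inj_on ?cyl W" "F = ?cyl ` W"
      using \<open>F \<subseteq> ?cyl ` G\<close> by (auto simp: subset_image_inj)
    then have "finite W" using \<open>finite F\<close> by (simp add: finite_image_iff)
    then have "real (card W) \<le> 4 / min_weight"
      using W assms(1,2) by (intro card_words_distinct_stopping_cylinders_le) (auto simp: G_def)
    then show ?thesis using W by (simp add: card_image le_nat_floor)
  qed
  then have "finite (?cyl ` G) \<and> card (?cyl ` G) \<le> nat \<lfloor>4 / min_weight\<rfloor>"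
    by (intro finite_if_finite_subsets_card_bdd) auto
  moreover have "real (nat \<lfloor>4 / min_weight\<rfloor>) \<le> 4 / min_weight" using min_weight_pos by simp
  ultimately show ?thesis by (meson of_nat_le_iff order_trans)
qed

end

locale ifs_dimension = ifs_weights +
  fixes d :: real
  assumes dim_pos: "0 < d" and weight_sum_dim: "weight_sum p n d = 1"
begin

definition "digit_weight i = (if i \<in> {1..n} then p i powr d else 0)"

lemma digit_weight_nonneg: "0 \<le> digit_weight i"
  by (simp add: digit_weight_def)

lemma nn_integral_digit_weight: "(\<integral>\<^sup>+i. ennreal (digit_weight i) \<partial>count_space UNIV) = 1"
proof -
  have "(\<integral>\<^sup>+i. ennreal (digit_weight i) \<partial>count_space UNIV) = (\<Sum>i\<in>{1..n}. ennreal (digit_weight i))"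
    by (rule nn_integral_count_space') (auto simp: digit_weight_def)
  also have "\<dots> = ennreal (weight_sum p n d)"
    by (simp add: digit_weight_def weight_sum_def sum_ennreal)
  finally show ?thesis by (simp add: weight_sum_dim)
qed

definition "digit_pmf = embed_pmf digit_weight"

lemma pmf_digit_pmf: "pmf digit_pmf i = digit_weight i"
  unfolding digit_pmf_def by (rule pmf_embed_pmf[OF digit_weight_nonneg nn_integral_digit_weight])

lemma set_pmf_digit_pmf: "set_pmf digit_pmf \<subseteq> {1..n}"
  unfolding digit_pmf_def set_embed_pmf[OF digit_weight_nonneg nn_integral_digit_weight]
  by (auto simp: digit_weight_def)

text \<open>Its image under \<open>pi_map p\<close> is the natural measure on \<open>Pi_set p n\<close>; it gives each
  cylinder the \<open>d\<close>-th power of the length of its interval.\<close>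
definition "bernoulli_measure = PiM UNIV (\<lambda>_::nat. measure_pmf digit_pmf)"

lemma prob_space_bernoulli_measure: "prob_space bernoulli_measure"
  unfolding bernoulli_measure_def by (intro prob_space_PiM prob_space_measure_pmf)

lemma cylinder_eq_prod_emb:
  "cylinder w k = prod_emb UNIV (\<lambda>_. measure_pmf digit_pmf) {..<k} (PiE {..<k} (\<lambda>j. {w j}))"
  by (auto simp: cylinder_def prod_emb_iff restrict_PiE_iff)

lemma sets_cylinder [measurable]: "cylinder w k \<in> sets bernoulli_measure"
  unfolding cylinder_eq_prod_emb bernoulli_measure_def by (rule sets_PiM_I) auto

lemma emeasure_cylinder:
  assumes "\<forall>j<k. w j \<in> {1..n}"
  shows "emeasure bernoulli_measure (cylinder w k) = ennreal (comp_scale p w k powr d)"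
proof -
  have "emeasure bernoulli_measure (cylinder w k) = (\<Prod>j<k. emeasure (measure_pmf digit_pmf) {w j})"
    unfolding cylinder_eq_prod_emb bernoulli_measure_def
    by (rule emeasure_PiM_emb) (auto intro: prob_space_measure_pmf)
  also have "\<dots> = ennreal (\<Prod>j<k. p (w j) powr d)"
    using assms by (simp add: emeasure_pmf_single pmf_digit_pmf digit_weight_def prod_ennreal)
  also have "(\<Prod>j<k. p (w j) powr d) = comp_scale p w k powr d"
    using assms by (simp add: comp_scale_def prod_powr_distrib weight_nonneg)
  finally show ?thesis .
qed

lemma AE_words: "AE v in bernoulli_measure. v \<in> words"
proof -
  have "AE v in bernoulli_measure. v j \<in> {1..n}" for j
  proof (rule AE_I')
    let ?B = "prod_emb UNIV (\<lambda>_. measure_pmf digit_pmf) {j} (PiE {j} (\<lambda>_. - {1..n}))"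
    have "emeasure bernoulli_measure ?B = emeasure (measure_pmf digit_pmf) (- {1..n})"
      unfolding bernoulli_measure_def by (subst emeasure_PiM_emb) (auto intro: prob_space_measure_pmf)
    also have "\<dots> = 0"
      using set_pmf_digit_pmf by (subst measure_pmf.emeasure_eq_measure) (auto simp: measure_pmf_zero_iff)
    finally show "?B \<in> null_sets bernoulli_measure"
      unfolding bernoulli_measure_def by (auto simp: null_sets_def intro: sets_PiM_I)
    show "{v \<in> space bernoulli_measure. v j \<notin> {1..n}} \<subseteq> ?B"
      by (auto simp: prod_emb_iff restrict_PiE_iff)
  qed
  then show ?thesis by (simp add: words_def AE_all_countable)
qed

lemma emeasure_stopping_cylinder_le:
  assumes w: "w \<in> words" and "0 < L"
  shows "emeasure bernoulli_measure (cylinder w (stopping_level L w)) \<le> ennreal (L powr d)"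
proof -
  have "emeasure bernoulli_measure (cylinder w (stopping_level L w))
      = ennreal (comp_scale p w (stopping_level L w) powr d)"
    using emeasure_cylinder[OF words_prefix[OF w]] .
  also have "\<dots> \<le> ennreal (L powr d)"
    using stopping_level_le[OF w \<open>0 < L\<close>] comp_scale_pos[OF words_prefix[OF w]] dim_pos
    by (intro ennreal_leI powr_mono2) (auto intro: less_imp_le)
  finally show ?thesis .
qed

lemma emeasure_preimage_le:
  assumes "bounded U" "diameter U \<le> L" "0 < L" "L < 1"
  shows "\<exists>C\<in>sets bernoulli_measure. {w \<in> words. pi_map p w \<in> U} \<subseteq> C
           \<and> emeasure bernoulli_measure C \<le> ennreal (4 / min_weight * L powr d)"
proof (cases "U = {}")
  case True
  then show ?thesis by (intro bexI[of _ "{}"]) auto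
next
  case False
  then obtain x where x: "x \<in> U" by blast
  define G where "G = {w \<in> words. \<bar>pi_map p w - x\<bar> \<le> L}"
  define CY where "CY = (\<lambda>w. cylinder w (stopping_level L w)) ` G"
  have CY: "finite CY" "real (card CY) \<le> 4 / min_weight"
    using card_stopping_cylinders_le[OF assms(3,4), of x] by (simp_all add: CY_def G_def)
  have "{w \<in> words. pi_map p w \<in> U} \<subseteq> \<Union>CY"
  proof
    fix w assume w: "w \<in> {w \<in> words. pi_map p w \<in> U}"
    then have "dist (pi_map p w) x \<le> diameter U" using x assms(1) by (intro diameter_bounded_bound) auto
    then have "w \<in> G" using w assms(2) by (simp add: G_def dist_real_def)
    moreover have "w \<in> cylinder w (stopping_level L w)" by (simp add: cylinder_def)
    ultimately show "w \<in> \<Union>CY" by (auto simp: CY_def)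
  qed
  moreover have "emeasure bernoulli_measure c \<le> ennreal (L powr d)" if "c \<in> CY" for c
    using that emeasure_stopping_cylinder_le \<open>0 < L\<close> by (auto simp: CY_def G_def)
  then have "emeasure bernoulli_measure (\<Union>CY) \<le> ennreal (4 / min_weight * L powr d)"
  proof -
    have "emeasure bernoulli_measure (\<Union>c\<in>CY. c) \<le> (\<Sum>c\<in>CY. emeasure bernoulli_measure c)"
      using CY(1) by (intro emeasure_subadditive_finite) (auto simp: CY_def)
    also have "\<dots> \<le> of_nat (card CY) * ennreal (L powr d)"
      by (rule sum_bounded_above) fact
    also have "\<dots> = ennreal (real (card CY) * L powr d)"
      by (simp add: ennreal_mult ennreal_of_nat_eq_real_of_nat)
    also have "\<dots> \<le> ennreal (4 / min_weight * L powr d)"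
      using CY(2) by (intro ennreal_leI mult_right_mono) auto
    finally show ?thesis by simp
  qed
  moreover have "\<Union>CY \<in> sets bernoulli_measure" using CY(1) by (auto simp: CY_def)
  ultimately show ?thesis by blast
qed

text \<open>The slack \<open>a\<close> makes the bound usable for sets of diameter \<open>0\<close>.\<close>
lemma emeasure_preimage_le_diameter:
  assumes "bounded U" "diameter U \<le> 1/2" "0 < a" "a < 1"
  shows "\<exists>C\<in>sets bernoulli_measure. {w \<in> words. pi_map p w \<in> U} \<subseteq> C
           \<and> emeasure bernoulli_measure C \<le> ennreal (4 / min_weight * (diameter U powr d + a))"
proof -
  define L where "L = max (diameter U) (a powr (1 / d))"
  have a_root: "0 < a powr (1 / d)" "a powr (1 / d) < 1" "(a powr (1 / d)) powr d = a"
    using assms(3,4) dim_pos powr_less_mono2[of "1 / d" a 1] by (auto simp: powr_powr)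
  have "0 < L" unfolding L_def by (rule max.strict_coboundedI2) (fact a_root(1))
  moreover have "L < 1" "diameter U \<le> L" using a_root(2) assms(2) by (auto simp: L_def)
  moreover have "L powr d \<le> diameter U powr d + a"
    using a_root assms(3) by (auto simp: L_def max_def)
  ultimately show ?thesis
    using emeasure_preimage_le[OF assms(1)] min_weight_pos
    by (meson ennreal_leI mult_left_mono order_trans less_imp_le divide_pos_pos zero_less_numeral)
qed

lemma one_le_sum_emeasure_preimage_cover:
  assumes cover: "Pi_set p n \<subseteq> (\<Union>i. U i)" and C: "\<And>i. C i \<in> sets bernoulli_measure"
    and preimage: "\<And>i. {w \<in> words. pi_map p w \<in> U i} \<subseteq> C i"
  shows "1 \<le> (\<Sum>i. emeasure bernoulli_measure (C i))"
proof -
  have "1 = emeasure bernoulli_measure (space bernoulli_measure)"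
    using prob_space.emeasure_space_1[OF prob_space_bernoulli_measure] by simp
  also have "\<dots> \<le> emeasure bernoulli_measure (\<Union>i. C i)"
  proof (rule emeasure_mono_AE)
    show "AE w in bernoulli_measure. w \<in> space bernoulli_measure \<longrightarrow> w \<in> (\<Union>i. C i)"
      using AE_words
    proof (rule AE_mp, intro AE_I2 impI)
      fix w assume "w \<in> words"
      then obtain i where "pi_map p w \<in> U i" using cover by (auto simp: Pi_set_eq)
      then show "w \<in> (\<Union>i. C i)" using preimage \<open>w \<in> words\<close> by blast
    qed
  qed (use C in auto)
  also have "\<dots> \<le> (\<Sum>i. emeasure bernoulli_measure (C i))"
    using C by (intro emeasure_subadditive_countably) auto
  finally show ?thesis .
qed

lemma sum_diameter_powr_ge_approx:
  assumes cover: "Pi_set p n \<subseteq> (\<Union>i. U i)" and small: "\<And>i. bounded (U i) \<and> diameter (U i) \<le> 1/2"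
    and "0 < \<epsilon>" "\<epsilon> \<le> 1"
  defines "K \<equiv> 4 / min_weight"
  shows "1 \<le> ennreal K * (\<Sum>i. ennreal (diameter (U i) powr d)) + ennreal (K * \<epsilon>)"
proof -
  have K: "0 < K" using min_weight_pos by (simp add: K_def)
  define a where "a i = \<epsilon> * (1/2) ^ Suc i" for i
  have a: "0 < a i" "a i < 1" for i
  proof -
    have "(1/2::real) ^ Suc i \<le> 1/2" using power_le_one[of "1/2::real" i] by simp
    then show "0 < a i" "a i < 1"
      using assms(3,4) mult_mono[of \<epsilon> 1 "(1/2) ^ Suc i" "1/2"] by (auto simp: a_def)
  qed
  have "\<forall>i. \<exists>C\<in>sets bernoulli_measure. {w \<in> words. pi_map p w \<in> U i} \<subseteq> C
          \<and> emeasure bernoulli_measure C \<le> ennreal (K * (diameter (U i) powr d + a i))"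
    using emeasure_preimage_le_diameter small a unfolding K_def by blast
  then obtain C where C: "\<forall>i. C i \<in> sets bernoulli_measure \<and> {w \<in> words. pi_map p w \<in> U i} \<subseteq> C i
          \<and> emeasure bernoulli_measure (C i) \<le> ennreal (K * (diameter (U i) powr d + a i))"
    unfolding Bex_def by (rule choice[THEN exE])
  have "1 \<le> (\<Sum>i. emeasure bernoulli_measure (C i))"
    using C by (intro one_le_sum_emeasure_preimage_cover[OF cover]) auto
  also have "\<dots> \<le> (\<Sum>i. ennreal K * ennreal (diameter (U i) powr d) + ennreal (K * a i))"
  proof (intro suminf_le summableI)
    fix i
    have "emeasure bernoulli_measure (C i) \<le> ennreal (K * (diameter (U i) powr d + a i))"
      using C by blast
    also have "\<dots> = ennreal K * ennreal (diameter (U i) powr d) + ennreal (K * a i)"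
      using K a(1)[of i] by (simp add: distrib_left ennreal_plus ennreal_mult)
    finally show "emeasure bernoulli_measure (C i)
        \<le> ennreal K * ennreal (diameter (U i) powr d) + ennreal (K * a i)" .
  qed
  also have "\<dots> = ennreal K * (\<Sum>i. ennreal (diameter (U i) powr d)) + (\<Sum>i. ennreal (K * a i))"
    by (subst suminf_add[symmetric]) auto
  also have "(\<Sum>i. ennreal (K * a i)) = ennreal (K * \<epsilon>)"
  proof -
    have "(\<lambda>i. K * a i) sums (K * (\<epsilon> * 1))"
      unfolding a_def by (intro sums_mult power_half_series)
    then show ?thesis using K a by (subst suminf_ennreal_eq) (auto intro: less_imp_le)
  qed
  finally show ?thesis .
qed

lemma sum_diameter_powr_ge:
  assumes cover: "Pi_set p n \<subseteq> (\<Union>i. U i)" and small: "\<And>i. bounded (U i) \<and> diameter (U i) \<le> 1/2"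
  shows "ennreal (min_weight / 4) \<le> (\<Sum>i. ennreal (diameter (U i) powr d))"
proof -
  define K where "K = 4 / min_weight"
  have K: "0 < K" using min_weight_pos by (simp add: K_def)
  define \<Sigma> where "\<Sigma> = (\<Sum>i. ennreal (diameter (U i) powr d))"
  have "1 \<le> ennreal K * \<Sigma>"
  proof (rule ennreal_le_epsilon)
    fix e :: real assume "0 < e"
    define \<epsilon> where "\<epsilon> = min (e / K) 1"
    have \<epsilon>: "0 < \<epsilon>" "\<epsilon> \<le> 1" "K * \<epsilon> \<le> e" using \<open>0 < e\<close> K by (auto simp: \<epsilon>_def min_def field_simps)
    have "1 \<le> ennreal K * \<Sigma> + ennreal (K * \<epsilon>)"
      unfolding \<Sigma>_def K_def by (rule sum_diameter_powr_ge_approx[OF cover small \<epsilon>(1,2)])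
    also have "\<dots> \<le> ennreal K * \<Sigma> + ennreal e"
      using \<epsilon>(3) by (intro add_left_mono ennreal_leI)
    finally show "1 \<le> ennreal K * \<Sigma> + ennreal e" .
  qed
  then have "ennreal (1 / K) \<le> ennreal (1 / K) * (ennreal K * \<Sigma>)"
    using mult_left_mono[of 1 "ennreal K * \<Sigma>" "ennreal (1 / K)"] by simp
  also have "\<dots> = \<Sigma>" using K by (simp add: ennreal_mult[symmetric] mult.assoc[symmetric])
  finally show ?thesis by (simp add: \<Sigma>_def K_def)
qed

lemma hausdorff_measure_Pi_set_ne_0:
  assumes "0 \<le> s" "s \<le> d"
  shows "hausdorff_measure s (Pi_set p n) \<noteq> 0"
proof -
  have "ennreal (min_weight / 4) \<le> hausdorff_approx s (1/2) (Pi_set p n)"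
    unfolding hausdorff_approx_def
  proof (rule INF_greatest, clarify)
    fix U :: "nat \<Rightarrow> real set"
    assume cover: "Pi_set p n \<subseteq> (\<Union>i. U i)" and small: "\<forall>i. bounded (U i) \<and> diameter (U i) \<le> 1/2"
    have "ennreal (min_weight / 4) \<le> (\<Sum>i. ennreal (diameter (U i) powr d))"
      using sum_diameter_powr_ge[OF cover] small by blast
    also have "\<dots> \<le> (\<Sum>i. ennreal (diameter (U i) powr s))"
    proof (intro suminf_le summableI ennreal_leI)
      fix i
      have "bounded (U i)" "diameter (U i) \<le> 1/2" using small by auto
      then have "0 \<le> diameter (U i)" "diameter (U i) \<le> 1" by (simp_all add: diameter_ge_0)
      then show "diameter (U i) powr d \<le> diameter (U i) powr s" using assms by (intro powr_mono') auto
    qed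
    finally show "ennreal (min_weight / 4) \<le> (\<Sum>i. ennreal (diameter (U i) powr s))" .
  qed
  also have "\<dots> \<le> hausdorff_measure s (Pi_set p n)"
    unfolding hausdorff_measure_def by (rule SUP_upper) auto
  finally have "ennreal (min_weight / 4) \<le> hausdorff_measure s (Pi_set p n)" .
  moreover have "0 < ennreal (min_weight / 4)" using min_weight_pos by simp
  ultimately show ?thesis by auto
qed

theorem hausdorff_dim_Pi_set: "hausdorff_dim (Pi_set p n) = d"
proof (rule hausdorff_dim_eqI)
  show "hausdorff_measure s (Pi_set p n) = 0" if "d < s" for s
    using weight_sum_strict_antimono[OF that] weight_sum_dim by (intro hausdorff_measure_Pi_set_eq_0) simp
  show "hausdorff_measure s (Pi_set p n) \<noteq> 0" if "0 \<le> s" "s \<le> d" for s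
    using that by (rule hausdorff_measure_Pi_set_ne_0)
qed (use dim_pos in simp)

end

context ifs_weights
begin

theorem weight_sum_eq_1_iff_hausdorff_dim:
  assumes "2 \<le> n"
  shows "weight_sum p n s = 1 \<longleftrightarrow> s = hausdorff_dim (Pi_set p n)"
proof -
  obtain d where d: "0 < d" "weight_sum p n d = 1"
    using weight_sum_eq_1_exists[OF assms] by auto
  interpret ifs_dimension p n d
    using d by unfold_locales
  show ?thesis using weight_sum_eq_1_unique[of s d] d(2) hausdorff_dim_Pi_set by auto
qed

end

section \<open>Geometric weights\<close>

lemma geom_pos: "0 < q \<Longrightarrow> q < 1 \<Longrightarrow> 0 < geom q i"
  by (simp add: geom_def)

lemma geom_le: "0 \<le> q \<Longrightarrow> q \<le> 1 \<Longrightarrow> geom q i \<le> 1 - q"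
  unfolding geom_def using mult_left_le[of "q ^ (i - 1)" "1 - q"] by (simp add: power_le_one)

lemma sum_geom: "(\<Sum>i=1..n. geom q i) = 1 - q ^ n"
  by (induction n) (simp_all add: geom_def algebra_simps)

lemma ifs_weights_geom:
  assumes "0 < q" "q < 1" "1 \<le> n"
  shows "ifs_weights (geom q) n"
proof
  show "0 < geom q i" for i using assms by (simp add: geom_pos)
  show "(\<Sum>i=1..n. geom q i) < 1" unfolding sum_geom using assms by simp
qed (fact assms(3))

lemma weight_sum_geom:
  assumes "0 < q" "q < 1" "s \<noteq> 0"
  shows "weight_sum (geom q) n s = (1 - q powr (s * real n)) * (1 - q) powr s / (1 - q powr s)"
proof -
  define y where "y = q powr s"
  have "y \<noteq> 1" using assms by (auto simp: y_def powr_eq_one_iff_gen)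
  have "weight_sum (geom q) n s = (\<Sum>i=1..n. (1 - q) powr s * y ^ (i - 1))"
    unfolding weight_sum_def geom_def y_def using assms
    by (intro sum.cong refl) (simp add: powr_mult powr_realpow[symmetric] powr_powr mult.commute)
  also have "\<dots> = (1 - q) powr s * (\<Sum>i\<in>Suc ` {..<n}. y ^ (i - 1))"
    by (simp add: sum_distrib_left image_Suc_lessThan)
  also have "(\<Sum>i\<in>Suc ` {..<n}. y ^ (i - 1)) = (1 - y ^ n) / (1 - y)"
    using \<open>y \<noteq> 1\<close> by (simp add: sum.reindex sum_gp_strict)
  also have "y ^ n = q powr (s * real n)"
    using assms by (simp add: y_def powr_powr powr_realpow[symmetric])
  finally show ?thesis by (simp add: y_def)
qed

lemma geom_dim_equation_iff:
  assumes "0 < q" "q < 1" "2 \<le> n"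
  shows "(1 - q powr (s * real n)) * (1 - q) powr s / (1 - q powr s) = 1 \<longleftrightarrow> weight_sum (geom q) n s = 1"
proof (cases "s = 0")
  case True
  then show ?thesis using assms by (simp add: weight_sum_def geom_def)
qed (use assms weight_sum_geom in simp)

lemma continuous_on_weight_sum_geom: "0 < t \<Longrightarrow> continuous_on {0..1} (\<lambda>q. weight_sum (geom q) n t)"
  unfolding weight_sum_def geom_def by (intro continuous_on_sum continuous_on_powr' continuous_intros) auto

text \<open>With \<open>a\<close> chosen so that \<open>a powr t = 4 * a\<close>, the first two terms alone add up to at least
  \<open>(1 - a) * (1 + 4 * a) \<ge> 1\<close>.\<close>
lemma weight_sum_geom_ge_1:
  assumes "0 < t" "t < 1" "2 \<le> n"
  shows "\<exists>a. 0 < a \<and> a \<le> 1/4 \<and> 1 \<le> weight_sum (geom a) n t"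
proof (intro exI conjI)
  define a where "a = (1/4::real) powr (1 / (1 - t))"
  show "0 < a" by (simp add: a_def)
  have "(1/4::real) powr (1 / (1 - t)) \<le> (1/4) powr 1" using assms by (intro powr_mono') auto
  then show a14: "a \<le> 1/4" by (simp add: a_def)
  have "a powr (t - 1) = (1/4) powr ((1 / (1 - t)) * (t - 1))" by (simp add: a_def powr_powr)
  also have "(1 / (1 - t)) * (t - 1) = -1" using assms by (simp add: field_simps)
  finally have "a powr t = 4 * a"
    using powr_add[of a "t - 1" 1] \<open>0 < a\<close> by (simp add: powr_minus_divide)
  have "(1 - a) powr 1 \<le> (1 - a) powr t" using assms \<open>0 < a\<close> a14 by (intro powr_mono') auto
  then have "1 - a \<le> (1 - a) powr t" using a14 by simp
  moreover have "(1 - a) * (4 * a) \<le> ((1 - a) * a) powr t"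
    using \<open>a powr t = 4 * a\<close> \<open>1 - a \<le> (1 - a) powr t\<close> \<open>0 < a\<close> a14
    by (simp add: powr_mult mult_right_mono)
  moreover have "1 \<le> (1 - a) + (1 - a) * (4 * a)" using \<open>0 < a\<close> a14 by (simp add: algebra_simps)
  moreover have "geom a 1 powr t + geom a 2 powr t \<le> weight_sum (geom a) n t"
    unfolding weight_sum_def using assms sum_mono2[of "{1..n}" "{1, 2}" "\<lambda>i. geom a i powr t"] by simp
  ultimately show "1 \<le> weight_sum (geom a) n t" by (simp add: geom_def)
qed

text \<open>For \<open>b = 1 - (1 / n) powr (1 / t)\<close> every term is at most \<open>(1 - b) powr t = 1 / n\<close>.\<close>
lemma weight_sum_geom_le_1:
  assumes "0 < t" "2 \<le> n"
  shows "\<exists>b. 0 < b \<and> b < 1 \<and> weight_sum (geom b) n t \<le> 1"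
proof (intro exI conjI)
  define b where "b = 1 - (1 / real n) powr (1 / t)"
  have "(1 / real n) powr (1 / t) < 1 powr (1 / t)" using assms by (intro powr_less_mono2) auto
  then show "0 < b" "b < 1" using assms by (simp_all add: b_def)
  have "geom b i powr t \<le> 1 / real n" for i
  proof -
    have "geom b i powr t \<le> (1 - b) powr t"
      using geom_le[of b i] geom_pos[of b i] \<open>0 < b\<close> \<open>b < 1\<close> \<open>0 < t\<close> by (intro powr_mono2) auto
    also have "(1 - b) powr t = 1 / real n" using assms by (simp add: b_def powr_powr)
    finally show ?thesis .
  qed
  then have "weight_sum (geom b) n t \<le> real (card {1..n}) * (1 / real n)"
    unfolding weight_sum_def by (intro sum_bounded_above) auto
  then show "weight_sum (geom b) n t \<le> 1" using assms by simp
qed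

lemma weight_sum_geom_eq_1_exists:
  assumes "0 < t" "t < 1" "2 \<le> n"
  shows "\<exists>q. 0 < q \<and> q < 1 \<and> weight_sum (geom q) n t = 1"
proof -
  obtain a where a: "0 < a" "a \<le> 1/4" "1 \<le> weight_sum (geom a) n t"
    using weight_sum_geom_ge_1[OF assms] by blast
  obtain b where b: "0 < b" "b < 1" "weight_sum (geom b) n t \<le> 1"
    using weight_sum_geom_le_1[OF assms(1,3)] by blast
  have cont: "continuous_on {x..y} (\<lambda>q. weight_sum (geom q) n t)" if "0 \<le> x" "y \<le> 1" for x y
    by (rule continuous_on_subset[OF continuous_on_weight_sum_geom[OF assms(1)]]) (use that in auto)
  show ?thesis
  proof (cases "a \<le> b")
    case True
    then obtain q where "a \<le> q" "q \<le> b" "weight_sum (geom q) n t = 1"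
      using IVT2'[of "\<lambda>q. weight_sum (geom q) n t" b 1 a] cont a b by auto
    then show ?thesis using a b by (intro exI[of _ q]) auto
  next
    case False
    then obtain q where "b \<le> q" "q \<le> a" "weight_sum (geom q) n t = 1"
      using IVT'[of "\<lambda>q. weight_sum (geom q) n t" b 1 a] cont a b by auto
    then show ?thesis using a b by (intro exI[of _ q]) auto
  qed
qed

theorem mainTheorem5:
  fixes n :: nat
  assumes "n \<ge> 2"
  shows "(\<forall>p::real. 0 < p \<and> p < 1 \<longrightarrow>
            (let F = (\<lambda>d::real. (1 - p powr (d * real n)) * (1 - p) powr d / (1 - p powr d) = 1)
             in F (hausdorff_dim (Pi_set (geom p) n)) \<and>
                (\<forall>d. F d \<longrightarrow> d = hausdorff_dim (Pi_set (geom p) n))))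
       \<and> (\<forall>t::real. 0 < t \<and> t < 1 \<longrightarrow>
            (\<exists>p::real. 0 < p \<and> p < 1 \<and> hausdorff_dim (Pi_set (geom p) n) = t))"
proof (intro conjI allI impI)
  fix q :: real assume "0 < q \<and> q < 1"
  then have q: "0 < q" "q < 1" by auto
  interpret ifs_weights "geom q" n using ifs_weights_geom q assms by simp
  show "let F = (\<lambda>d. (1 - q powr (d * real n)) * (1 - q) powr d / (1 - q powr d) = 1)
    in F (hausdorff_dim (Pi_set (geom q) n)) \<and> (\<forall>d. F d \<longrightarrow> d = hausdorff_dim (Pi_set (geom q) n))"
    unfolding Let_def geom_dim_equation_iff[OF q assms] weight_sum_eq_1_iff_hausdorff_dim[OF assms] by simp
next
  fix t :: real assume "0 < t \<and> t < 1"
  then obtain q where q: "0 < q" "q < 1" "weight_sum (geom q) n t = 1"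
    using weight_sum_geom_eq_1_exists assms by blast
  then interpret ifs_weights "geom q" n using ifs_weights_geom assms by simp
  show "\<exists>p. 0 < p \<and> p < 1 \<and> hausdorff_dim (Pi_set (geom p) n) = t"
    using q assms weight_sum_eq_1_iff_hausdorff_dim by auto
qed

end
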